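(* Let $n\geq 3$ and let $L^B$ be a blow-up of the Boolean lattice $L\cong\mathbf{2}^n$. Then the independence number of $G^c(L^B)_{SR}$ is $\beta\bigl(G^c(L^B)_{SR}\bigr)=2^{n-1}-1$.
   Context: Blow-up: keep $0,1$ of $L=\mathbf{2}^n$ and replace every $x\in L\setminus\{0,1\}$ by a finite nonempty chain $C_x$, ordered by the chain order within $C_x$ and, for $a\in C_x,b\in C_y$, $x\neq y$, by $a\leq b$ iff $x\leq y$ in $L$; $0$ least, $1$ greatest. $Z^*(M)$ is the set of nonzero $a$ with $a\wedge b=0$ for some $b\neq0$; $G^c(M)$ has vertex set $Z^*(M)$, distinct $a,b$ adjacent iff $a\wedge b\neq 0$. In a connected graph, $u$ is maximally distant from $v$ if $d(v,w)\leq d(u,v)$ for all neighbours $w$ of $u$; mutually maximally distant means each is maximally distant from the other. $G_{SR}$ has as vertices those $u$ mutually maximally distant from some $v$, distinct vertices adjacent iff mutually maximally distant in $G$. $\beta(G)$ is the maximum size of a set of pairwise non-adjacent vertices. *)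

theory Defs
  imports Main
begin

text \<open>The Boolean lattice 2^n is represented as the powerset of {0..<n}.
 The blow-up replaces every x with {} < x < {0..<n} by a finite nonempty chain C_x,
 represented (up to isomorphism) as {0..<k x} with k x >= 1.\<close>

datatype blow = Bot | Top | Mid "nat set" nat

definition proper_elt :: "nat \<Rightarrow> nat set \<Rightarrow> bool" where
  "proper_elt n x \<longleftrightarrow> x \<subseteq> {0..<n} \<and> x \<noteq> {} \<and> x \<noteq> {0..<n}"

definition blow_carrier :: "nat \<Rightarrow> (nat set \<Rightarrow> nat) \<Rightarrow> blow set" where
  "blow_carrier n k = {Bot, Top} \<union> {Mid x i | x i. proper_elt n x \<and> i < k x}"

fun blow_le :: "blow \<Rightarrow> blow \<Rightarrow> bool" where
  "blow_le Bot _ = True"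
| "blow_le _ Top = True"
| "blow_le Top _ = False"
| "blow_le (Mid _ _) Bot = False"
| "blow_le (Mid x i) (Mid y j) = ((x = y \<and> i \<le> j) \<or> x \<subset> y)"

definition meet_zero :: "nat \<Rightarrow> (nat set \<Rightarrow> nat) \<Rightarrow> blow \<Rightarrow> blow \<Rightarrow> bool" where
  "meet_zero n k a b \<longleftrightarrow>
     (\<forall>c\<in>blow_carrier n k. blow_le c a \<and> blow_le c b \<longrightarrow> c = Bot)"

definition Zstar :: "nat \<Rightarrow> (nat set \<Rightarrow> nat) \<Rightarrow> blow set" where
  "Zstar n k = {a \<in> blow_carrier n k. a \<noteq> Bot \<and>
                   (\<exists>b\<in>blow_carrier n k. b \<noteq> Bot \<and> meet_zero n k a b)}"

definition Gc_adj :: "nat \<Rightarrow> (nat set \<Rightarrow> nat) \<Rightarrow> blow \<Rightarrow> blow \<Rightarrow> bool" where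
  "Gc_adj n k a b \<longleftrightarrow> a \<in> Zstar n k \<and> b \<in> Zstar n k \<and> a \<noteq> b \<and> \<not> meet_zero n k a b"

definition is_walk :: "'a set \<Rightarrow> ('a \<Rightarrow> 'a \<Rightarrow> bool) \<Rightarrow> 'a list \<Rightarrow> bool" where
  "is_walk V E xs \<longleftrightarrow> xs \<noteq> [] \<and> set xs \<subseteq> V \<and>
     (\<forall>i. Suc i < length xs \<longrightarrow> E (xs ! i) (xs ! Suc i))"

definition gdist :: "'a set \<Rightarrow> ('a \<Rightarrow> 'a \<Rightarrow> bool) \<Rightarrow> 'a \<Rightarrow> 'a \<Rightarrow> nat" where
  "gdist V E u v = (LEAST m. \<exists>xs. is_walk V E xs \<and> hd xs = u \<and> last xs = v \<and> length xs = Suc m)"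

definition max_distant :: "'a set \<Rightarrow> ('a \<Rightarrow> 'a \<Rightarrow> bool) \<Rightarrow> 'a \<Rightarrow> 'a \<Rightarrow> bool" where
  "max_distant V E u v \<longleftrightarrow> (\<forall>w\<in>V. E u w \<longrightarrow> gdist V E v w \<le> gdist V E u v)"

definition mutually_max_distant :: "'a set \<Rightarrow> ('a \<Rightarrow> 'a \<Rightarrow> bool) \<Rightarrow> 'a \<Rightarrow> 'a \<Rightarrow> bool" where
  "mutually_max_distant V E u v \<longleftrightarrow> max_distant V E u v \<and> max_distant V E v u"

definition SR_vertices :: "'a set \<Rightarrow> ('a \<Rightarrow> 'a \<Rightarrow> bool) \<Rightarrow> 'a set" where
  "SR_vertices V E = {u \<in> V. \<exists>v\<in>V. mutually_max_distant V E u v}"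

definition SR_adj :: "'a set \<Rightarrow> ('a \<Rightarrow> 'a \<Rightarrow> bool) \<Rightarrow> 'a \<Rightarrow> 'a \<Rightarrow> bool" where
  "SR_adj V E u v \<longleftrightarrow> u \<in> SR_vertices V E \<and> v \<in> SR_vertices V E \<and> u \<noteq> v \<and>
      mutually_max_distant V E u v"

definition indep_number :: "'a set \<Rightarrow> ('a \<Rightarrow> 'a \<Rightarrow> bool) \<Rightarrow> nat" where
  "indep_number V E = Max {card S | S. S \<subseteq> V \<and> (\<forall>a\<in>S. \<forall>b\<in>S. \<not> E a b)}"

end

theory Submission imports Defs begin

(* Two vertices of G^c(L^B) are adjacent exactly when their images in 2^n intersect, and the
  graph has diameter 2: vertices with disjoint images containing a and b are joined through a
  vertex over {a,b}, which is proper as n >= 3. A neighbour u of v is maximally distant from v iff the image of u lies in that of v,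
  so the strong resolving graph lives on all vertices and joins two vertices iff their images are
  equal or disjoint. An independent set therefore maps injectively onto an intersecting family of
  proper subsets of {0..<n}; adding the full set, such a family has at most 2^(n-1) members, and
  the proper subsets containing 0 attain the bound. *)

lemma gdist_le:
  assumes "is_walk V E xs" "hd xs = u" "last xs = v" "length xs = Suc m"
  shows "gdist V E u v \<le> m"
  unfolding gdist_def by (rule Least_le) (use assms in blast)

lemma gdist_shortest_walk:
  assumes "is_walk V E xs" "hd xs = u" "last xs = v"
  obtains ys where "is_walk V E ys" "hd ys = u" "last ys = v" "length ys = Suc (gdist V E u v)"
proof -
  have "\<exists>m xs. is_walk V E xs \<and> hd xs = u \<and> last xs = v \<and> length xs = Suc m"
    using assms by (metis is_walk_def length_greater_0_conv Suc_pred)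
  then have "\<exists>ys. is_walk V E ys \<and> hd ys = u \<and> last ys = v \<and> length ys = Suc (gdist V E u v)"
    unfolding gdist_def by (rule LeastI_ex)
  then show thesis using that by blast
qed

lemma gdist_diameter_2:
  assumes "u \<in> V" "v \<in> V"
    and common_neighbour: "u \<noteq> v \<Longrightarrow> \<not> E u v \<Longrightarrow> \<exists>w\<in>V. E u w \<and> E w v"
  shows "gdist V E u v = (if u = v then 0 else if E u v then 1 else 2)"
proof -
  obtain xs where xs: "is_walk V E xs" "hd xs = u" "last xs = v"
    and len: "length xs = Suc (if u = v then 0 else if E u v then 1 else 2)"
  proof (cases "u = v")
    case True
    then show thesis using that[of "[u]"] \<open>u \<in> V\<close> by (simp add: is_walk_def)
  next
    case uv: False
    show thesis
    proof (cases "E u v")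
      case True
      then show thesis using that[of "[u, v]"] uv assms(1,2) by (simp add: is_walk_def less_Suc_eq)
    next
      case False
      then obtain w where "w \<in> V" "E u w" "E w v" using common_neighbour uv by blast
      then show thesis using that[of "[u, w, v]"] uv False assms(1,2)
        by (simp add: is_walk_def less_Suc_eq nth_Cons split: nat.splits)
    qed
  qed
  obtain ys where ys: "is_walk V E ys" "hd ys = u" "last ys = v"
    and len_ys: "length ys = Suc (gdist V E u v)"
    using gdist_shortest_walk[OF xs] .
  have "u = v" if "gdist V E u v = 0"
    using ys len_ys that by (cases ys) auto
  moreover have "E u v" if "gdist V E u v = 1"
  proof -
    have "length ys = 2" using len_ys that by simp
    then obtain a b where "ys = [a, b]" by (auto simp: length_Suc_conv numeral_2_eq_2)
    then show ?thesis using ys by (auto simp: is_walk_def)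
  qed
  moreover have "gdist V E u v \<le> (if u = v then 0 else if E u v then 1 else 2)"
    using gdist_le[OF xs len] .
  ultimately show ?thesis by (auto split: if_splits simp: le_Suc_eq numeral_2_eq_2)
qed

lemma max_distant_diameter_2:
  assumes gdist: "\<And>u v. u \<in> V \<Longrightarrow> v \<in> V \<Longrightarrow>
      gdist V E u v = (if u = v then 0 else if E u v then 1 else 2)"
    and "u \<in> V" "v \<in> V" "u \<noteq> v"
  shows "max_distant V E u v \<longleftrightarrow> (E u v \<longrightarrow> (\<forall>w\<in>V. E u w \<longrightarrow> w = v \<or> E v w))"
  using assms by (auto simp: max_distant_def)

lemma card_intersecting_family:
  assumes "finite A" "F \<subseteq> Pow A" "\<forall>X\<in>F. \<forall>Y\<in>F. X \<inter> Y \<noteq> {}"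
  shows "2 * card F \<le> 2 ^ card A"
proof -
  let ?G = "(\<lambda>X. A - X) ` F"
  have "finite F" using assms(1,2) by (meson finite_Pow_iff rev_finite_subset)
  have "F \<inter> ?G = {}" using assms(3) by blast
  moreover have "card ?G = card F"
    using assms(2) by (intro card_image) (auto simp: inj_on_def)
  ultimately have "card (F \<union> ?G) = 2 * card F"
    using card_Un_disjoint[of F ?G] \<open>finite F\<close> by simp
  moreover have "card (F \<union> ?G) \<le> card (Pow A)"
    by (rule card_mono) (use assms in auto)
  ultimately show ?thesis using card_Pow[of A] assms(1) by simp
qed

lemma card_intersecting_proper_family:
  assumes "finite A" "A \<noteq> {}" "F \<subseteq> Pow A - {A}" "\<forall>X\<in>F. \<forall>Y\<in>F. X \<inter> Y \<noteq> {}"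
  shows "card F \<le> 2 ^ (card A - 1) - 1"
proof -
  have "X \<inter> A = X" "A \<inter> X = X" if "X \<in> F" for X
    using assms(3) that by auto
  then have "\<forall>X\<in>insert A F. \<forall>Y\<in>insert A F. X \<inter> Y \<noteq> {}"
    using assms(2,4) by auto
  then have "2 * card (insert A F) \<le> 2 ^ card A"
    using assms(1,3) by (intro card_intersecting_family) auto
  moreover have "finite F" "A \<notin> F"
    using assms(1,3) finite_subset[of F "Pow A"] by auto
  then have "card (insert A F) = card F + 1" by simp
  moreover have "card A > 0" using assms(1,2) card_gt_0_iff by blast
  then have "(2::nat) ^ card A = 2 * 2 ^ (card A - 1)" by (simp add: power_eq_if)
  ultimately show ?thesis by simp
qed

lemma indep_number_eqI:
  assumes "\<And>S. S \<subseteq> V \<Longrightarrow> \<forall>a\<in>S. \<forall>b\<in>S. \<not> E a b \<Longrightarrow> card S \<le> m"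
    and "S \<subseteq> V" "\<forall>a\<in>S. \<forall>b\<in>S. \<not> E a b" "card S = m"
  shows "indep_number V E = m"
  unfolding indep_number_def
proof (rule Max_eqI)
  show "finite {card S |S. S \<subseteq> V \<and> (\<forall>a\<in>S. \<forall>b\<in>S. \<not> E a b)}"
    by (rule finite_subset[of _ "{..m}"]) (use assms(1) in auto)
qed (use assms in auto)

lemma blow_le_refl: "blow_le a a"
  by (cases a) auto

lemma proper_eltI:
  assumes "x \<noteq> {}" "x \<subseteq> {0..<n}" "card x < n"
  shows "proper_elt n x"
  using assms by (auto simp: proper_elt_def)

lemma proper_elt_complement: "proper_elt n x \<Longrightarrow> proper_elt n ({0..<n} - x)"
  unfolding proper_elt_def by blast

(* Bot and Top are never vertices of G^c, so their values are irrelevant. *)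
fun blow_base :: "blow \<Rightarrow> nat set" where
  "blow_base (Mid x i) = x"
| "blow_base Bot = {}"
| "blow_base Top = {}"

locale blow_up =
  fixes n :: nat and k :: "nat set \<Rightarrow> nat"
  assumes chains_nonempty: "\<And>x. proper_elt n x \<Longrightarrow> k x \<ge> 1"
begin

lemma Mid_in_blow_carrier: "proper_elt n x \<Longrightarrow> Mid x 0 \<in> blow_carrier n k"
  using chains_nonempty[of x] by (auto simp: blow_carrier_def)

lemma meet_zero_Mid_iff:
  assumes "proper_elt n x" "proper_elt n y"
  shows "meet_zero n k (Mid x i) (Mid y j) \<longleftrightarrow> x \<inter> y = {}"
proof
  assume meet: "meet_zero n k (Mid x i) (Mid y j)"
  show "x \<inter> y = {}"
  proof (rule ccontr)
    assume "x \<inter> y \<noteq> {}"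
    then have "Mid (x \<inter> y) 0 \<in> blow_carrier n k"
      using assms by (intro Mid_in_blow_carrier) (auto simp: proper_elt_def)
    moreover have "blow_le (Mid (x \<inter> y) 0) (Mid x i)" "blow_le (Mid (x \<inter> y) 0) (Mid y j)"
      by (auto simp: Int_absorb2 psubset_eq)
    ultimately show False using meet unfolding meet_zero_def by blast
  qed
next
  assume "x \<inter> y = {}"
  then show "meet_zero n k (Mid x i) (Mid y j)"
    unfolding meet_zero_def
  proof (intro ballI impI)
    fix c assume c: "c \<in> blow_carrier n k" "blow_le c (Mid x i) \<and> blow_le c (Mid y j)"
    show "c = Bot"
    proof (cases c)
      case (Mid z l)
      then have "z \<noteq> {}" using c by (auto simp: blow_carrier_def proper_elt_def)
      moreover have "z \<subseteq> x" "z \<subseteq> y" using c Mid by auto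
      ultimately show ?thesis using \<open>x \<inter> y = {}\<close> by blast
    qed (use c in auto)
  qed
qed

lemma Zstar_eq: "Zstar n k = {Mid x i | x i. proper_elt n x \<and> i < k x}"
proof
  show "Zstar n k \<subseteq> {Mid x i | x i. proper_elt n x \<and> i < k x}"
  proof
    fix a assume a: "a \<in> Zstar n k"
    then obtain b where b: "b \<in> blow_carrier n k" "b \<noteq> Bot" "meet_zero n k a b"
      by (auto simp: Zstar_def)
    have "a \<noteq> Top"
    proof
      assume "a = Top"
      then have "blow_le b a" by (cases b) auto
      then show False using b blow_le_refl[of b] unfolding meet_zero_def by blast
    qed
    then show "a \<in> {Mid x i | x i. proper_elt n x \<and> i < k x}"
      using a by (auto simp: Zstar_def blow_carrier_def)
  qed
next
  show "{Mid x i | x i. proper_elt n x \<and> i < k x} \<subseteq> Zstar n k"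
  proof clarify
    fix x i assume x: "proper_elt n x" and "i < k x"
    have "proper_elt n ({0..<n} - x)" using proper_elt_complement[OF x] .
    moreover have "meet_zero n k (Mid x i) (Mid ({0..<n} - x) 0)"
      using meet_zero_Mid_iff[OF x \<open>proper_elt n ({0..<n} - x)\<close>] by blast
    ultimately show "Mid x i \<in> Zstar n k"
      using x \<open>i < k x\<close> Mid_in_blow_carrier by (auto simp: Zstar_def blow_carrier_def)
  qed
qed

lemma Zstar_iff: "u \<in> Zstar n k \<longleftrightarrow> (\<exists>x i. u = Mid x i \<and> proper_elt n x \<and> i < k x)"
  using Zstar_eq by auto

lemma Mid_in_Zstar: "proper_elt n x \<Longrightarrow> Mid x 0 \<in> Zstar n k"
  using chains_nonempty Zstar_iff by fastforce

lemma proper_elt_blow_base: "u \<in> Zstar n k \<Longrightarrow> proper_elt n (blow_base u)"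
  using Zstar_iff by auto

lemma Gc_adj_iff:
  "Gc_adj n k u v \<longleftrightarrow>
     u \<in> Zstar n k \<and> v \<in> Zstar n k \<and> u \<noteq> v \<and> blow_base u \<inter> blow_base v \<noteq> {}"
  unfolding Gc_adj_def using Zstar_iff meet_zero_Mid_iff by auto

context
  assumes n_ge_3: "n \<ge> 3"
begin

lemma gdist_Gc:
  assumes u: "u \<in> Zstar n k" and v: "v \<in> Zstar n k"
  shows "gdist (Zstar n k) (Gc_adj n k) u v =
     (if u = v then 0 else if Gc_adj n k u v then 1 else 2)"
proof (rule gdist_diameter_2[OF u v])
  assume "u \<noteq> v" "\<not> Gc_adj n k u v"
  then have disjoint: "blow_base u \<inter> blow_base v = {}" using Gc_adj_iff u v by blast
  obtain a b where a: "a \<in> blow_base u" and b: "b \<in> blow_base v" and "a < n" "b < n"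
    using proper_elt_blow_base[OF u] proper_elt_blow_base[OF v]
    unfolding proper_elt_def by (metis atLeastLessThan_iff ex_in_conv subsetD)
  have "card {a, b} < n" using n_ge_3 by (cases "a = b") auto
  then have w: "Mid {a, b} 0 \<in> Zstar n k"
    using \<open>a < n\<close> \<open>b < n\<close> by (intro Mid_in_Zstar proper_eltI) auto
  have "Gc_adj n k u (Mid {a, b} 0)" "Gc_adj n k (Mid {a, b} 0) v"
    using Gc_adj_iff u v w a b disjoint by auto
  then show "\<exists>w\<in>Zstar n k. Gc_adj n k u w \<and> Gc_adj n k w v" using w by blast
qed

lemma max_distant_Gc_iff:
  assumes u: "u \<in> Zstar n k" and v: "v \<in> Zstar n k" and "u \<noteq> v"
  shows "max_distant (Zstar n k) (Gc_adj n k) u v \<longleftrightarrow>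
    (blow_base u \<inter> blow_base v \<noteq> {} \<longrightarrow> blow_base u \<subseteq> blow_base v)"
proof -
  have "blow_base u \<subseteq> blow_base v"
    if meet: "blow_base u \<inter> blow_base v \<noteq> {}"
      and neighbours: "\<forall>w\<in>Zstar n k. Gc_adj n k u w \<longrightarrow> w = v \<or> Gc_adj n k v w"
  proof
    fix a assume a: "a \<in> blow_base u"
    have "a < n" using a proper_elt_blow_base[OF u] by (auto simp: proper_elt_def)
    then have w: "Mid {a} 0 \<in> Zstar n k"
      using n_ge_3 by (intro Mid_in_Zstar proper_eltI) auto
    show "a \<in> blow_base v"
    proof (cases "Mid {a} 0 = u")
      case True
      then have "blow_base u = {a}" by force
      then show ?thesis using meet by auto
    next
      case False
      then have "Gc_adj n k u (Mid {a} 0)" using Gc_adj_iff u w a by auto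
      then have "Mid {a} 0 = v \<or> Gc_adj n k v (Mid {a} 0)" using neighbours w by blast
      then show ?thesis using Gc_adj_iff by auto
    qed
  qed
  moreover have "Gc_adj n k v w"
    if "blow_base u \<subseteq> blow_base v" "w \<in> Zstar n k" "w \<noteq> v" "Gc_adj n k u w" for w
    using that Gc_adj_iff v by blast
  moreover have "max_distant (Zstar n k) (Gc_adj n k) u v \<longleftrightarrow>
      (Gc_adj n k u v \<longrightarrow> (\<forall>w\<in>Zstar n k. Gc_adj n k u w \<longrightarrow> w = v \<or> Gc_adj n k v w))"
    using gdist_Gc u v \<open>u \<noteq> v\<close> by (rule max_distant_diameter_2)
  moreover have "Gc_adj n k u v \<longleftrightarrow> blow_base u \<inter> blow_base v \<noteq> {}"
    using Gc_adj_iff u v \<open>u \<noteq> v\<close> by blast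
  ultimately show ?thesis by blast
qed

lemma SR_vertices_Gc: "SR_vertices (Zstar n k) (Gc_adj n k) = Zstar n k"
proof -
  have "u \<in> SR_vertices (Zstar n k) (Gc_adj n k)" if u: "u \<in> Zstar n k" for u
  proof -
    let ?v = "Mid ({0..<n} - blow_base u) 0"
    have "proper_elt n ({0..<n} - blow_base u)"
      using proper_elt_complement proper_elt_blow_base u by blast
    then have v: "?v \<in> Zstar n k" using Mid_in_Zstar by blast
    have "blow_base ?v \<noteq> blow_base u" using proper_elt_blow_base[OF u] by (auto simp: proper_elt_def)
    then have "u \<noteq> ?v" by metis
    then show ?thesis
      using u v max_distant_Gc_iff[OF u v] max_distant_Gc_iff[OF v u]
      by (auto simp: SR_vertices_def mutually_max_distant_def)
  qed
  then show ?thesis by (auto simp: SR_vertices_def)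
qed

lemma SR_adj_Gc_iff:
  "SR_adj (Zstar n k) (Gc_adj n k) u v \<longleftrightarrow>
     u \<in> Zstar n k \<and> v \<in> Zstar n k \<and> u \<noteq> v \<and>
     (blow_base u = blow_base v \<or> blow_base u \<inter> blow_base v = {})"
proof (cases "u \<in> Zstar n k \<and> v \<in> Zstar n k \<and> u \<noteq> v")
  case True
  then show ?thesis
    using max_distant_Gc_iff[of u v] max_distant_Gc_iff[of v u]
    by (auto simp: SR_adj_def SR_vertices_Gc mutually_max_distant_def Int_commute)
qed (auto simp: SR_adj_def SR_vertices_Gc)

lemma card_SR_independent_le:
  assumes S: "S \<subseteq> Zstar n k" and indep: "\<forall>a\<in>S. \<forall>b\<in>S. \<not> SR_adj (Zstar n k) (Gc_adj n k) a b"
  shows "card S \<le> 2 ^ (n - 1) - 1"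
proof -
  let ?F = "blow_base ` S"
  have related: "blow_base a \<noteq> blow_base b \<and> blow_base a \<inter> blow_base b \<noteq> {}"
    if "a \<in> S" "b \<in> S" "a \<noteq> b" for a b
    using indep that S SR_adj_Gc_iff[of a b] by blast
  then have "inj_on blow_base S" by (meson inj_onI)
  then have card_S: "card S = card ?F" by (rule card_image[symmetric])
  have "?F \<subseteq> Pow {0..<n} - {{0..<n}}"
    using S proper_elt_blow_base by (fastforce simp: proper_elt_def)
  moreover have "X \<inter> Y \<noteq> {}" if "X \<in> ?F" "Y \<in> ?F" for X Y
  proof (cases "X = Y")
    case True
    then show ?thesis using that S proper_elt_blow_base by (fastforce simp: proper_elt_def)
  next
    case False then show ?thesis using that related by blast
  qed
  ultimately have "card ?F \<le> 2 ^ (card {0..<n} - 1) - 1"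
    using n_ge_3 by (intro card_intersecting_proper_family) auto
  then show ?thesis using card_S by simp
qed

lemma SR_independent_witness:
  defines "S \<equiv> (\<lambda>x. Mid x 0) ` (insert 0 ` Pow {1..<n} - {{0..<n}})"
  shows "S \<subseteq> Zstar n k" "\<forall>a\<in>S. \<forall>b\<in>S. \<not> SR_adj (Zstar n k) (Gc_adj n k) a b"
    "card S = 2 ^ (n - 1) - 1"
proof -
  let ?T = "insert 0 ` Pow {1..<n} - {{0..<n}}"
  have T: "proper_elt n x \<and> 0 \<in> x" if "x \<in> ?T" for x
    using that n_ge_3 by (auto simp: proper_elt_def)
  show "S \<subseteq> Zstar n k" using T Mid_in_Zstar by (auto simp: S_def)
  show "\<forall>a\<in>S. \<forall>b\<in>S. \<not> SR_adj (Zstar n k) (Gc_adj n k) a b"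
  proof (intro ballI)
    fix a b assume "a \<in> S" "b \<in> S"
    then obtain x y where "x \<in> ?T" "y \<in> ?T" and ab: "a = Mid x 0" "b = Mid y 0"
      unfolding S_def by blast
    then have "0 \<in> blow_base a \<inter> blow_base b" using T[of x] T[of y] by simp
    moreover have "a \<noteq> b \<longrightarrow> blow_base a \<noteq> blow_base b" using ab by simp
    ultimately show "\<not> SR_adj (Zstar n k) (Gc_adj n k) a b" using SR_adj_Gc_iff[of a b] by blast
  qed
  have "inj_on (insert (0::nat)) (Pow {1..<n})"
    by (rule inj_onI) (metis PowD atLeastLessThan_iff insert_ident not_one_le_zero subset_iff)
  then have "card (insert 0 ` Pow {1..<n}) = 2 ^ (n - 1)"
    by (simp add: card_image card_Pow)
  moreover have "{0..<n} \<in> insert 0 ` Pow {1..<n}"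
    using n_ge_3 by (intro image_eqI[of _ _ "{1..<n}"]) auto
  ultimately have "card ?T = 2 ^ (n - 1) - 1" by simp
  then show "card S = 2 ^ (n - 1) - 1"
    unfolding S_def by (subst card_image) (simp_all add: inj_on_def)
qed

end
end

theorem lemma3p19:
  fixes n :: nat and k :: "nat set \<Rightarrow> nat"
  assumes "n \<ge> 3"
    and "\<And>x. proper_elt n x \<Longrightarrow> k x \<ge> 1"
  shows "indep_number (SR_vertices (Zstar n k) (Gc_adj n k))
                      (SR_adj (Zstar n k) (Gc_adj n k)) = 2 ^ (n - 1) - 1"
proof -
  interpret blow_up n k using assms(2) by unfold_locales
  show ?thesis
    unfolding SR_vertices_Gc[OF assms(1)]
    using card_SR_independent_le[OF assms(1)] SR_independent_witness[OF assms(1)]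
    by (rule indep_number_eqI)
qed

end
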